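(* Let $\alpha,\beta>0$ and set $a=\frac{1}{1+\alpha}$, $\theta=\frac{\beta}{1+\alpha}$. For every $n\ge1$, the random partition of $\{1,\dots,n\}$ produced at time $n$ by the Chinese restaurant process with parameters $a$ and $\theta$ has the same distribution as the partition of $\{1,\dots,n\}$ into the label sets of the branches (subtrees rooted at the children of the root) of the random tree with $n+1$ nodes produced by the growth process of the family $\mathcal{T}_{\alpha,\beta}$.
   Context: Chinese restaurant process with parameters $0<a<1$, $\theta>-a$: at time $1$ the partition is $\{\{1\}\}$. Given a partition of $\{1,\dots,n\}$ with $k$ blocks $t_1,\dots,t_k$, element $n+1$ is added to block $t_i$ with probability $\frac{|t_i|-a}{n+\theta}$, and forms a new singleton block with probability $\frac{\theta+ka}{n+\theta}$. Growth process of $\mathcal{T}_{\alpha,\beta}$ (generalized plane recursive trees with root weight $(1-t)^{-\beta}$ and non-root weight $(1-t)^{-\alpha}$): start with a single root labelled $0$; at step $n+1$ ($n\ge0$), when the current tree has nodes $0,1,\dots,n$, the new node labelled $n+1$ is attached as a child to a non-root node $v$ with probability $\frac{d(v)+\alpha}{\beta+(\alpha+1)n}$ and to the root with probability $\frac{d(\mathrm{root})+\beta}{\beta+(\alpha+1)n}$, where $d(v)$ is the current outdegree of $v$. *)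

theory Defs
  imports "HOL-Probability.Probability_Mass_Function"
begin

definition crp_step_density :: "real \<Rightarrow> real \<Rightarrow> nat \<Rightarrow> nat set set \<Rightarrow> nat set set \<Rightarrow> real" where
  "crp_step_density a \<theta> n P Q =
     (\<Sum>t\<in>P. if Q = insert (insert (Suc n) t) (P - {t})
               then (real (card t) - a) / (real n + \<theta>) else 0)
     + (if Q = insert {Suc n} P then (\<theta> + real (card P) * a) / (real n + \<theta>) else 0)"

definition crp_step :: "real \<Rightarrow> real \<Rightarrow> nat \<Rightarrow> nat set set \<Rightarrow> nat set set pmf" where
  "crp_step a \<theta> n P = embed_pmf (crp_step_density a \<theta> n P)"

fun crp :: "real \<Rightarrow> real \<Rightarrow> nat \<Rightarrow> nat set set pmf" where
  "crp a \<theta> 0 = return_pmf {}"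
| "crp a \<theta> (Suc 0) = return_pmf {{1}}"
| "crp a \<theta> (Suc (Suc n)) = crp a \<theta> (Suc n) \<bind> crp_step a \<theta> (Suc n)"

text \<open>A tree on nodes {0..n} (root 0) is represented by its parent function
  par :: nat \<Rightarrow> nat, where par i is the parent of node i for 1 \<le> i \<le> n, and
  par i = 0 for all other i (normalisation). The plane ordering of children is
  irrelevant for the branch partition and is not recorded.\<close>

definition outdeg :: "nat \<Rightarrow> (nat \<Rightarrow> nat) \<Rightarrow> nat \<Rightarrow> nat" where
  "outdeg n par v = card {i \<in> {1..n}. par i = v}"

definition tree_step_density :: "real \<Rightarrow> real \<Rightarrow> nat \<Rightarrow> (nat \<Rightarrow> nat) \<Rightarrow> (nat \<Rightarrow> nat) \<Rightarrow> real" where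
  "tree_step_density \<alpha> \<beta> n par par' =
     (\<Sum>v\<in>{0..n}. if par' = par(Suc n := v)
        then (real (outdeg n par v) + (if v = 0 then \<beta> else \<alpha>)) / (\<beta> + (\<alpha> + 1) * real n)
        else 0)"

definition tree_step :: "real \<Rightarrow> real \<Rightarrow> nat \<Rightarrow> (nat \<Rightarrow> nat) \<Rightarrow> (nat \<Rightarrow> nat) pmf" where
  "tree_step \<alpha> \<beta> n par = embed_pmf (tree_step_density \<alpha> \<beta> n par)"

fun growth :: "real \<Rightarrow> real \<Rightarrow> nat \<Rightarrow> (nat \<Rightarrow> nat) pmf" where
  "growth \<alpha> \<beta> 0 = return_pmf (\<lambda>_. 0)"
| "growth \<alpha> \<beta> (Suc n) = growth \<alpha> \<beta> n \<bind> tree_step \<alpha> \<beta> n"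

definition branch_partition :: "nat \<Rightarrow> (nat \<Rightarrow> nat) \<Rightarrow> nat set set" where
  "branch_partition n par =
     {{i \<in> {1..n}. \<exists>k. (par ^^ k) i = c} | c. c \<in> {1..n} \<and> par c = 0}"

end

theory Submission
  imports Defs
begin

text \<open>The branches of the tree partition \<open>{1..n}\<close>. Attaching node \<open>n+1\<close> below a node of the
  branch \<open>t\<close> adds \<open>n+1\<close> to \<open>t\<close>; attaching it to the root opens the new branch \<open>{n+1}\<close>. The
  \<open>|t|\<close> nodes of \<open>t\<close> have \<open>|t| - 1\<close> children altogether, so \<open>n+1\<close> joins \<open>t\<close> with probability
  \<open>((1+\<alpha>)|t| - 1) / (\<beta> + (1+\<alpha>)n) = (|t| - a) / (n + \<theta>)\<close>, while the root, which has one child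
  per branch, is chosen with probability \<open>(k + \<beta>) / (\<beta> + (1+\<alpha>)n) = (\<theta> + k a) / (n + \<theta>)\<close>.
  Hence one growth step, seen through the branch partition, is one step of the Chinese
  restaurant process, and induction on \<open>n\<close> finishes the proof.\<close>

definition pushforward_weight :: "('a \<Rightarrow> 'b) \<Rightarrow> ('a \<Rightarrow> real) \<Rightarrow> 'a set \<Rightarrow> 'b \<Rightarrow> real" where
  "pushforward_weight f w A y = (\<Sum>a\<in>A. if y = f a then w a else 0)"

lemma pushforward_weight_eq_0: "y \<notin> f ` A \<Longrightarrow> pushforward_weight f w A y = 0"
  unfolding pushforward_weight_def by (intro sum.neutral) auto

lemma sum_pushforward_weight:
  assumes "finite A"
  shows "(\<Sum>y\<in>{y\<in>f ` A. P y}. pushforward_weight f w A y) = (\<Sum>a\<in>A. if P (f a) then w a else 0)"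
proof -
  have "(\<Sum>y\<in>{y\<in>f ` A. P y}. pushforward_weight f w A y)
      = (\<Sum>a\<in>A. \<Sum>y\<in>{y\<in>f ` A. P y}. if y = f a then w a else 0)"
    unfolding pushforward_weight_def by (rule sum.swap)
  also have "\<dots> = (\<Sum>a\<in>A. if P (f a) then w a else 0)"
    using assms by (intro sum.cong refl) (auto simp: sum.delta)
  finally show ?thesis .
qed

context
  fixes A :: "'a set" and w :: "'a \<Rightarrow> real"
  assumes finite: "finite A" and nonneg: "\<And>a. a \<in> A \<Longrightarrow> w a \<ge> 0" and sum_eq_1: "sum w A = 1"
begin

lemma pushforward_weight_nonneg: "pushforward_weight f w A y \<ge> 0"
  unfolding pushforward_weight_def using nonneg by (intro sum_nonneg) auto

lemma nn_integral_pushforward_weight: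
  "(\<integral>\<^sup>+y. ennreal (pushforward_weight f w A y) \<partial>count_space UNIV) = 1"
proof -
  have "(\<integral>\<^sup>+y. ennreal (pushforward_weight f w A y) \<partial>count_space UNIV)
      = (\<Sum>y\<in>f ` A. ennreal (pushforward_weight f w A y))"
    using finite by (intro nn_integral_count_space') (auto simp: pushforward_weight_eq_0)
  also have "\<dots> = ennreal (\<Sum>y\<in>f ` A. pushforward_weight f w A y)"
    by (intro sum_ennreal pushforward_weight_nonneg)
  also have "(\<Sum>y\<in>f ` A. pushforward_weight f w A y) = 1"
    using sum_pushforward_weight[OF finite, where P = "\<lambda>_. True" and f = f and w = w] sum_eq_1 by simp
  finally show ?thesis by simp
qed

lemma pmf_embed_pushforward_weight:
  "pmf (embed_pmf (pushforward_weight f w A)) y = pushforward_weight f w A y"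
  by (intro pmf_embed_pmf pushforward_weight_nonneg nn_integral_pushforward_weight)

lemma set_pmf_embed_pushforward_weight:
  "set_pmf (embed_pmf (pushforward_weight f w A)) \<subseteq> f ` A"
  using pushforward_weight_eq_0[of _ f A w]
  by (auto simp: set_pmf_eq pmf_embed_pushforward_weight)

lemma map_pmf_embed_pushforward_weight:
  "map_pmf g (embed_pmf (pushforward_weight f w A)) = embed_pmf (pushforward_weight (g \<circ> f) w A)"
proof (rule pmf_eqI)
  fix z
  let ?M = "embed_pmf (pushforward_weight f w A)"
  have "pmf (map_pmf g ?M) z = measure ?M (g -` {z} \<inter> set_pmf ?M)"
    by (simp add: pmf_map measure_Int_set_pmf)
  also have "g -` {z} \<inter> set_pmf ?M = (g -` {z} \<inter> f ` A) \<inter> set_pmf ?M"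
    using set_pmf_embed_pushforward_weight[of f] by blast
  also have "measure ?M \<dots> = measure ?M (g -` {z} \<inter> f ` A)"
    by (rule measure_Int_set_pmf)
  also have "\<dots> = (\<Sum>y\<in>{y\<in>f ` A. g y = z}. pushforward_weight f w A y)"
    using finite by (simp add: measure_measure_pmf_finite pmf_embed_pushforward_weight Int_def conj_commute)
  also have "\<dots> = (\<Sum>a\<in>A. if g (f a) = z then w a else 0)"
    by (rule sum_pushforward_weight[OF finite])
  also have "\<dots> = pushforward_weight (g \<circ> f) w A z"
    by (simp add: pushforward_weight_def eq_commute)
  finally show "pmf (map_pmf g ?M) z = pmf (embed_pmf (pushforward_weight (g \<circ> f) w A)) z"
    by (simp add: pmf_embed_pushforward_weight)
qed

end

locale recursive_tree =
  fixes n :: nat and par :: "nat \<Rightarrow> nat"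
  assumes parent_less: "i \<in> {1..n} \<Longrightarrow> par i < i"
    and parent_outside: "i \<notin> {1..n} \<Longrightarrow> par i = 0"

definition root_children :: "nat \<Rightarrow> (nat \<Rightarrow> nat) \<Rightarrow> nat set" where
  "root_children n par = {c \<in> {1..n}. par c = 0}"

definition branch :: "nat \<Rightarrow> (nat \<Rightarrow> nat) \<Rightarrow> nat \<Rightarrow> nat set" where
  "branch n par c = {i \<in> {1..n}. \<exists>k. (par ^^ k) i = c}"

lemma branch_partition_eq_image: "branch_partition n par = branch n par ` root_children n par"
  unfolding branch_partition_def branch_def root_children_def by auto

context recursive_tree
begin

lemma parent_le: "par i \<le> i"
  using parent_less parent_outside by (cases "i \<in> {1..n}") (auto simp: less_imp_le)

lemma parent_le_n: "par i \<le> n"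
  using parent_less parent_outside by (cases "i \<in> {1..n}") force+

lemma funpow_parent_zero: "(par ^^ k) 0 = 0"
  by (induction k) (auto simp: parent_outside)

lemma funpow_parent_le: "(par ^^ k) i \<le> i"
  by (induction k) (auto intro: le_trans[OF parent_le])

lemma funpow_root_child: "c \<in> root_children n par \<Longrightarrow> (par ^^ Suc k) c = 0"
  unfolding funpow_Suc_right comp_apply root_children_def by (simp add: funpow_parent_zero)

lemma finite_branch: "finite (branch n par c)"
  unfolding branch_def by simp

lemma root_child_in_branch: "c \<in> root_children n par \<Longrightarrow> c \<in> branch n par c"
  unfolding root_children_def branch_def by (auto intro: exI[of _ 0])

lemma branch_unique:
  assumes "c \<in> root_children n par" "c' \<in> root_children n par"
    and "i \<in> branch n par c" "i \<in> branch n par c'"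
  shows "c = c'"
proof -
  have "c = c'" if "(par ^^ k) i = c" "(par ^^ m) i = c'" "k \<le> m"
    "c \<in> root_children n par" "c' \<in> root_children n par" for k m c c'
  proof (cases "k = m")
    case False
    \<comment> \<open>past the root child \<open>c\<close> the ancestor chain of \<open>i\<close> only visits the root \<open>0\<close>\<close>
    then obtain j where "m = Suc (k + j)" using \<open>k \<le> m\<close> less_imp_Suc_add[of k m] by fastforce
    then have "m = Suc j + k" by simp
    then have "c' = (par ^^ Suc j) c" using that(1,2) by (simp add: funpow_add)
    then show ?thesis using funpow_root_child[OF that(4)] that(5) by (simp add: root_children_def)
  qed (use that in simp)
  moreover obtain k m where "(par ^^ k) i = c" "(par ^^ m) i = c'"
    using assms(3,4) unfolding branch_def by auto
  ultimately show ?thesis using assms(1,2) by (metis nat_le_linear)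
qed

lemma ex_branch: "i \<in> {1..n} \<Longrightarrow> \<exists>c\<in>root_children n par. i \<in> branch n par c"
proof (induction i rule: less_induct)
  case (less i)
  show ?case
  proof (cases "par i = 0")
    case True
    then have "i \<in> root_children n par" using less.prems by (simp add: root_children_def)
    then show ?thesis using root_child_in_branch by blast
  next
    case False
    then have "par i \<in> {1..n}" using parent_le_n[of i] by simp
    with less.IH parent_less[OF less.prems] obtain c k
      where "c \<in> root_children n par" "(par ^^ k) (par i) = c"
      unfolding branch_def by blast
    then show ?thesis using less.prems unfolding branch_def
      by (metis (mono_tags, lifting) comp_apply funpow_Suc_right mem_Collect_eq)
  qed
qed

lemma inj_on_branch: "inj_on (branch n par) (root_children n par)"
  by (intro inj_onI) (metis branch_unique root_child_in_branch)

lemma Union_branch_partition: "\<Union> (branch_partition n par) = {1..n}"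
  using ex_branch unfolding branch_partition_eq_image by (auto simp: branch_def)

lemma branch_partition_disjoint:
  "t \<in> branch_partition n par \<Longrightarrow> t' \<in> branch_partition n par \<Longrightarrow> t \<noteq> t' \<Longrightarrow> t \<inter> t' = {}"
  unfolding branch_partition_eq_image using branch_unique by blast

lemma sum_over_branches: "sum f {1..n} = (\<Sum>t\<in>branch_partition n par. sum f t)"
proof -
  have "sum f (\<Union> (branch_partition n par)) = (\<Sum>t\<in>branch_partition n par. sum f t)"
    using branch_partition_disjoint
    by (subst sum.Union_disjoint) (auto simp: branch_partition_eq_image finite_branch)
  then show ?thesis by (simp only: Union_branch_partition)
qed

lemma outdeg_root: "outdeg n par 0 = card (branch_partition n par)"
  unfolding branch_partition_eq_image card_image[OF inj_on_branch]
  by (simp add: outdeg_def root_children_def)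

lemma sum_outdeg_eq_card_children:
  "finite S \<Longrightarrow> sum (outdeg n par) S = card {i \<in> {1..n}. par i \<in> S}"
  unfolding outdeg_def
  by (subst card_UN_disjoint[symmetric]) (auto intro: arg_cong[where f = card])

lemma sum_outdeg: "sum (outdeg n par) {0..n} = n"
proof -
  have "{i \<in> {1..n}. par i \<in> {0..n}} = {1..n}" using parent_le_n by auto
  then show ?thesis by (simp add: sum_outdeg_eq_card_children)
qed

lemma children_of_branch:
  assumes "c \<in> root_children n par"
  shows "{i \<in> {1..n}. par i \<in> branch n par c} = branch n par c - {c}"
proof (intro set_eqI iffI)
  fix i assume i: "i \<in> {i \<in> {1..n}. par i \<in> branch n par c}"
  then obtain k where "(par ^^ Suc k) i = c"
    unfolding branch_def funpow_Suc_right comp_apply by blast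
  moreover have "i \<noteq> c" using i assms unfolding root_children_def branch_def by auto
  ultimately show "i \<in> branch n par c - {c}" using i unfolding branch_def by blast
next
  fix i assume i: "i \<in> branch n par c - {c}"
  then obtain k where "(par ^^ k) i = c" and "k \<noteq> 0" unfolding branch_def by fastforce
  then obtain j where k: "(par ^^ j) (par i) = c"
    by (metis comp_apply funpow_Suc_right not0_implies_Suc)
  have "par i \<noteq> 0"
  proof
    assume "par i = 0"
    then have "c = 0" using k by (simp add: funpow_parent_zero)
    then show False using assms by (simp add: root_children_def)
  qed
  then show "i \<in> {i \<in> {1..n}. par i \<in> branch n par c}"
    using i k parent_le_n[of i] unfolding branch_def by auto
qed

lemma sum_outdeg_branch:
  assumes "t \<in> branch_partition n par"
  shows "real (sum (outdeg n par) t) = real (card t) - 1"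
proof -
  obtain c where c: "c \<in> root_children n par" and t: "t = branch n par c"
    using assms unfolding branch_partition_eq_image by blast
  have "sum (outdeg n par) t = card (t - {c})"
    using children_of_branch[OF c] by (simp add: sum_outdeg_eq_card_children t finite_branch)
  moreover have "card t \<ge> 1"
    using root_child_in_branch[OF c] finite_branch[of c] by (auto simp: t Suc_le_eq card_gt_0_iff)
  ultimately show ?thesis
    using root_child_in_branch[OF c] finite_branch[of c] by (simp add: t of_nat_diff)
qed

context
  fixes v assumes v_le: "v \<le> n"
begin

lemma recursive_tree_attach: "recursive_tree (Suc n) (par(Suc n := v))"
  using v_le parent_less parent_outside by unfold_locales auto

lemma funpow_attach_old: "i \<le> n \<Longrightarrow> (par(Suc n := v) ^^ k) i = (par ^^ k) i"
proof (induction k)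
  case (Suc k)
  then show ?case using funpow_parent_le[of k i] by simp
qed simp

lemma funpow_attach_new: "(par(Suc n := v) ^^ Suc k) (Suc n) = (par ^^ k) v"
  unfolding funpow_Suc_right comp_apply using v_le by (simp add: funpow_attach_old)

lemma root_children_attach:
  "root_children (Suc n) (par(Suc n := v))
     = (if v = 0 then insert (Suc n) (root_children n par) else root_children n par)"
  unfolding root_children_def by auto

lemma branch_attach:
  assumes "c \<in> {1..n}"
  shows "branch (Suc n) (par(Suc n := v)) c
           = (if v \<in> branch n par c then insert (Suc n) (branch n par c) else branch n par c)"
proof -
  have "(\<exists>k. (par(Suc n := v) ^^ k) (Suc n) = c) \<longleftrightarrow> (\<exists>k. (par ^^ k) v = c)"
    using assms by (metis funpow_attach_new funpow_0 not0_implies_Suc atLeastAtMost_iff Suc_n_not_le_n)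
  also have "\<dots> \<longleftrightarrow> v \<in> branch n par c"
    using assms v_le funpow_parent_zero unfolding branch_def by (cases "v = 0") auto
  finally show ?thesis
    unfolding branch_def using funpow_attach_old by (auto simp: le_Suc_eq)
qed

lemma branch_attach_new: "branch (Suc n) (par(Suc n := v)) (Suc n) = {Suc n}"
proof -
  have "(par(Suc n := v) ^^ k) i \<noteq> Suc n" if "i \<le> n" for i k
    using that funpow_attach_old funpow_parent_le[of k i] by simp
  then show ?thesis
    unfolding branch_def by (auto simp: le_Suc_eq intro: exI[of _ 0])
qed

end

lemma branch_partition_attach_root:
  "branch_partition (Suc n) (par(Suc n := 0)) = insert {Suc n} (branch_partition n par)"
proof -
  have "branch (Suc n) (par(Suc n := 0)) c = branch n par c" if "c \<in> root_children n par" for c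
    using that branch_attach[of 0 c] by (simp add: root_children_def branch_def)
  then show ?thesis
    unfolding branch_partition_eq_image root_children_attach[OF le0]
    using branch_attach_new[of 0] by simp
qed

lemma branch_partition_attach_branch:
  assumes t: "t \<in> branch_partition n par" and v: "v \<in> t"
  shows "branch_partition (Suc n) (par(Suc n := v))
           = insert (insert (Suc n) t) (branch_partition n par - {t})"
proof -
  obtain c0 where c0: "c0 \<in> root_children n par" and t_eq: "t = branch n par c0"
    using t unfolding branch_partition_eq_image by blast
  have v_le: "v \<le> n" and "v \<noteq> 0" using v t_eq by (auto simp: branch_def)
  have "branch (Suc n) (par(Suc n := v)) c
          = (if c = c0 then insert (Suc n) t else branch n par c)"
    if "c \<in> root_children n par" for c
    using branch_attach[OF v_le, of c] branch_unique[OF that c0] v that t_eq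
    by (auto simp: root_children_def)
  then have "branch_partition (Suc n) (par(Suc n := v))
               = insert (insert (Suc n) t) (branch n par ` (root_children n par - {c0}))"
    unfolding branch_partition_eq_image root_children_attach[OF v_le] using \<open>v \<noteq> 0\<close> c0
    by (auto simp: image_iff)
  also have "branch n par ` (root_children n par - {c0}) = branch_partition n par - {t}"
    unfolding branch_partition_eq_image t_eq using inj_on_image_set_diff[OF inj_on_branch] c0 by auto
  finally show ?thesis .
qed

end

definition attach_weight :: "real \<Rightarrow> real \<Rightarrow> nat \<Rightarrow> (nat \<Rightarrow> nat) \<Rightarrow> nat \<Rightarrow> real" where
  "attach_weight \<alpha> \<beta> n par v =
     (real (outdeg n par v) + (if v = 0 then \<beta> else \<alpha>)) / (\<beta> + (\<alpha> + 1) * real n)"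

lemma tree_step_eq_embed_pushforward:
  "tree_step \<alpha> \<beta> n par
     = embed_pmf (pushforward_weight (\<lambda>v. par(Suc n := v)) (attach_weight \<alpha> \<beta> n par) {0..n})"
  unfolding tree_step_def tree_step_density_def pushforward_weight_def attach_weight_def by simp

lemma branch_weight_eq_crp_weight:
  fixes x \<alpha> \<beta> r :: real
  assumes "1 + \<alpha> \<noteq> 0"
  shows "(x - 1 + \<alpha> * x) / (\<beta> + (\<alpha> + 1) * r) = (x - 1 / (1 + \<alpha>)) / (r + \<beta> / (1 + \<alpha>))"
proof -
  have "x - 1 / (1 + \<alpha>) = (x - 1 + \<alpha> * x) / (1 + \<alpha>)"
    and "r + \<beta> / (1 + \<alpha>) = (\<beta> + (\<alpha> + 1) * r) / (1 + \<alpha>)"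
    using assms by (simp_all add: field_simps)
  then show ?thesis using assms by simp
qed

lemma root_weight_eq_crp_weight:
  fixes x \<alpha> \<beta> r :: real
  assumes "1 + \<alpha> \<noteq> 0"
  shows "(x + \<beta>) / (\<beta> + (\<alpha> + 1) * r) = (\<beta> / (1 + \<alpha>) + x * (1 / (1 + \<alpha>))) / (r + \<beta> / (1 + \<alpha>))"
proof -
  have "\<beta> / (1 + \<alpha>) + x * (1 / (1 + \<alpha>)) = (x + \<beta>) / (1 + \<alpha>)"
    and "r + \<beta> / (1 + \<alpha>) = (\<beta> + (\<alpha> + 1) * r) / (1 + \<alpha>)"
    using assms by (simp add: add_divide_distrib, simp add: field_simps)
  then show ?thesis using assms by simp
qed

context recursive_tree
begin

context
  fixes \<alpha> \<beta> :: real assumes \<alpha>_nonneg: "\<alpha> \<ge> 0" and \<beta>_pos: "\<beta> > 0"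
begin

lemma attach_weight_nonneg: "attach_weight \<alpha> \<beta> n par v \<ge> 0"
  unfolding attach_weight_def using \<alpha>_nonneg \<beta>_pos by (simp add: add_pos_nonneg)

lemma sum_attach_weight: "sum (attach_weight \<alpha> \<beta> n par) {0..n} = 1"
proof -
  have "(\<Sum>v\<in>{0..n}. if v = 0 then \<beta> else \<alpha>) = \<beta> + real n * \<alpha>"
    by (simp add: sum.atLeast_Suc_atMost)
  then have "(\<Sum>v\<in>{0..n}. real (outdeg n par v) + (if v = 0 then \<beta> else \<alpha>)) = \<beta> + (\<alpha> + 1) * real n"
    by (simp add: sum.distrib sum_outdeg flip: of_nat_sum) (simp add: algebra_simps)
  moreover have "\<beta> + (\<alpha> + 1) * real n > 0" using \<alpha>_nonneg \<beta>_pos by (simp add: add_pos_nonneg)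
  ultimately show ?thesis unfolding attach_weight_def by (simp flip: sum_divide_distrib)
qed

lemma sum_attach_weight_branch:
  assumes "t \<in> branch_partition n par"
  shows "sum (attach_weight \<alpha> \<beta> n par) t
           = (real (card t) - 1 / (1 + \<alpha>)) / (real n + \<beta> / (1 + \<alpha>))"
proof -
  have "0 \<notin> t" using assms unfolding branch_partition_eq_image branch_def by auto
  then have "(\<Sum>v\<in>t. if v = 0 then \<beta> else \<alpha>) = (\<Sum>v\<in>t. \<alpha>)"
    by (intro sum.cong) auto
  then have "sum (attach_weight \<alpha> \<beta> n par) t
      = (real (sum (outdeg n par) t) + \<alpha> * real (card t)) / (\<beta> + (\<alpha> + 1) * real n)"
    unfolding attach_weight_def by (simp add: sum.distrib mult.commute flip: sum_divide_distrib)
  then show ?thesis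
    using sum_outdeg_branch[OF assms] branch_weight_eq_crp_weight[of \<alpha> "real (card t)" \<beta> "real n"] \<alpha>_nonneg
    by simp
qed

lemma pushforward_branch_partition_eq_crp_step_density:
  "pushforward_weight (\<lambda>v. branch_partition (Suc n) (par(Suc n := v))) (attach_weight \<alpha> \<beta> n par) {0..n}
     = crp_step_density (1 / (1 + \<alpha>)) (\<beta> / (1 + \<alpha>)) n (branch_partition n par)"
proof
  fix Q
  let ?P = "branch_partition n par"
  let ?g = "\<lambda>v. if Q = branch_partition (Suc n) (par(Suc n := v)) then attach_weight \<alpha> \<beta> n par v else 0"
  have "sum ?g t = (if Q = insert (insert (Suc n) t) (?P - {t})
                    then (real (card t) - 1 / (1 + \<alpha>)) / (real n + \<beta> / (1 + \<alpha>)) else 0)"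
    if "t \<in> ?P" for t
    using branch_partition_attach_branch[OF that] sum_attach_weight_branch[OF that] by simp
  moreover have "?g 0 = (if Q = insert {Suc n} ?P
      then (\<beta> / (1 + \<alpha>) + real (card ?P) * (1 / (1 + \<alpha>))) / (real n + \<beta> / (1 + \<alpha>)) else 0)"
    using root_weight_eq_crp_weight[of \<alpha> "real (card ?P)" \<beta> "real n"] \<alpha>_nonneg
    by (simp add: branch_partition_attach_root attach_weight_def outdeg_root)
  moreover have "sum ?g {0..n} = ?g 0 + (\<Sum>t\<in>?P. sum ?g t)"
    by (simp add: sum.atLeast_Suc_atMost flip: sum_over_branches)
  ultimately show "pushforward_weight (\<lambda>v. branch_partition (Suc n) (par(Suc n := v))) (attach_weight \<alpha> \<beta> n par) {0..n} Q
     = crp_step_density (1 / (1 + \<alpha>)) (\<beta> / (1 + \<alpha>)) n ?P Q"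
    unfolding pushforward_weight_def crp_step_density_def by (simp add: add.commute)
qed

lemma map_branch_partition_tree_step:
  "map_pmf (branch_partition (Suc n)) (tree_step \<alpha> \<beta> n par)
     = crp_step (1 / (1 + \<alpha>)) (\<beta> / (1 + \<alpha>)) n (branch_partition n par)"
  unfolding tree_step_eq_embed_pushforward crp_step_def
    map_pmf_embed_pushforward_weight[OF finite_atLeastAtMost attach_weight_nonneg sum_attach_weight]
  by (simp add: comp_def pushforward_branch_partition_eq_crp_step_density)

lemma set_pmf_tree_step: "set_pmf (tree_step \<alpha> \<beta> n par) \<subseteq> (\<lambda>v. par(Suc n := v)) ` {0..n}"
  unfolding tree_step_eq_embed_pushforward
  by (rule set_pmf_embed_pushforward_weight[OF finite_atLeastAtMost attach_weight_nonneg sum_attach_weight])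

end

end

context
  fixes \<alpha> \<beta> :: real assumes \<alpha>_nonneg: "\<alpha> \<ge> 0" and \<beta>_pos: "\<beta> > 0"
begin

lemma recursive_tree_growth: "par \<in> set_pmf (growth \<alpha> \<beta> n) \<Longrightarrow> recursive_tree n par"
proof (induction n arbitrary: par)
  case 0
  then show ?case by unfold_locales simp_all
next
  case (Suc n)
  then obtain par0 where par0: "par0 \<in> set_pmf (growth \<alpha> \<beta> n)" "par \<in> set_pmf (tree_step \<alpha> \<beta> n par0)"
    by auto
  interpret recursive_tree n par0 using Suc.IH[OF par0(1)] .
  obtain v where "v \<le> n" and par_eq: "par = par0(Suc n := v)"
    using set_pmf_tree_step[OF \<alpha>_nonneg \<beta>_pos] par0(2) by auto
  from \<open>v \<le> n\<close> show ?case unfolding par_eq by (rule recursive_tree_attach)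
qed

lemma map_branch_partition_growth_Suc:
  "map_pmf (branch_partition (Suc n)) (growth \<alpha> \<beta> (Suc n))
     = map_pmf (branch_partition n) (growth \<alpha> \<beta> n) \<bind> crp_step (1 / (1 + \<alpha>)) (\<beta> / (1 + \<alpha>)) n"
proof -
  have "map_pmf (branch_partition (Suc n)) (growth \<alpha> \<beta> (Suc n))
      = growth \<alpha> \<beta> n \<bind> (\<lambda>par. map_pmf (branch_partition (Suc n)) (tree_step \<alpha> \<beta> n par))"
    by (simp add: map_bind_pmf)
  also have "\<dots> = growth \<alpha> \<beta> n \<bind> (\<lambda>par. crp_step (1 / (1 + \<alpha>)) (\<beta> / (1 + \<alpha>)) n (branch_partition n par))"
    by (intro bind_pmf_cong refl recursive_tree.map_branch_partition_tree_step
        recursive_tree_growth \<alpha>_nonneg \<beta>_pos)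
  finally show ?thesis by (simp add: bind_map_pmf)
qed

lemma map_branch_partition_growth_1:
  "map_pmf (branch_partition 1) (growth \<alpha> \<beta> 1) = return_pmf {{1}}"
proof -
  have "par = (\<lambda>_. 0)" if "par \<in> set_pmf (growth \<alpha> \<beta> 1)" for par
  proof
    interpret recursive_tree 1 par using recursive_tree_growth[OF that] .
    show "par i = 0" for i using parent_less[of i] parent_outside[of i] by (cases "i \<in> {1..1}") auto
  qed
  moreover have "branch_partition 1 (\<lambda>_. 0) = {{1}}"
    unfolding branch_partition_def by (auto intro: exI[of _ 0])
  ultimately show ?thesis unfolding map_pmf_eq_return_pmf_iff by blast
qed

end

theorem proposition3:
  fixes \<alpha> \<beta> :: real and n :: nat
  assumes "\<alpha> > 0" and "\<beta> > 0" and "n \<ge> 1"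
  shows "map_pmf (branch_partition n) (growth \<alpha> \<beta> n)
           = crp (1 / (1 + \<alpha>)) (\<beta> / (1 + \<alpha>)) n"
  using \<open>n \<ge> 1\<close>
proof (induction n rule: dec_induct)
  case base
  have "map_pmf (branch_partition 1) (growth \<alpha> \<beta> 1) = return_pmf {{1}}"
    using assms by (intro map_branch_partition_growth_1) auto
  moreover have "crp (1 / (1 + \<alpha>)) (\<beta> / (1 + \<alpha>)) 1 = return_pmf {{1}}" by simp
  ultimately show ?case by (simp only:)
next
  case (step m)
  then obtain k where m: "m = Suc k" by (cases m) auto
  have "map_pmf (branch_partition (Suc m)) (growth \<alpha> \<beta> (Suc m))
      = map_pmf (branch_partition m) (growth \<alpha> \<beta> m) \<bind> crp_step (1 / (1 + \<alpha>)) (\<beta> / (1 + \<alpha>)) m"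
    using assms by (intro map_branch_partition_growth_Suc) auto
  also have "\<dots> = crp (1 / (1 + \<alpha>)) (\<beta> / (1 + \<alpha>)) (Suc m)"
    unfolding step.IH by (simp add: m)
  finally show ?case .
qed

end
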